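(* Let $r\in\mathbb{N}$ and $\mathrm{Re}(z)>0$. For any integers $M_l\ge 0$ ($0\le l\le r-1$), \begin{multline*} \zeta_r(s,z)=\sum_{l=0}^{r-1}\frac{P^l_r(z)}{s-l-1}z^{-s+l+1}+\frac12\sum_{l=0}^{r-1}P^l_r(z)z^{-s+l}+\sum_{l=0}^{r-1}P^l_r(z)\sum_{k_l=1}^{M_l}\frac{B_{k_l+1}}{(k_l+1)!}(s-l)_{k_l}z^{-s+l-k_l}\\ -\sum_{l=0}^{r-1}\frac{P^l_r(z)(s-l)_{M_l+1}}{(M_l+1)!}\int_0^\infty\widetilde{B}_{M_l+1}(x)(x+z)^{-s+l-M_l-1}\,dx, \end{multline*} and this expression gives an analytic continuation of $\zeta_r(s,z)$ to the region $\mathrm{Re}(s)>M$, where $M:=\max\{-M_l+l\mid 0\le l\le r-1\}$.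
   Context: $\zeta_r(s,z):=\sum_{n_1,\ldots,n_r\ge0}(n_1+\cdots+n_r+z)^{-s}$ for $\mathrm{Re}(s)>r$. $(x)_l:=x(x+1)\cdots(x+l-1)$ (with $(x)_0=1$), and the Stirling numbers of the first kind $s(l,j)$ are defined by $(x)_l=\sum_{j=0}^l s(l,j)x^j$. For $0\le l\le r-1$, $P^l_r(z):=\frac{1}{(r-1)!}\sum_{j=l}^{r-1}\binom{j}{l}s(r,j+1)(-z)^{j-l}$. $B_k$ are the Bernoulli numbers, $B_k(x)$ the Bernoulli polynomials, and $\widetilde{B}_k(x):=B_k(x-\lfloor x\rfloor)$ the periodic Bernoulli functions. Complex powers use the principal branch. *)

theory Defs
  imports "HOL-Analysis.Analysis" "HOL-Combinatorics.Stirling"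
begin

text \<open>Bernoulli numbers with the convention B_1 = -1/2:
  B_0 = 1 and sum_{k=0}^{n} (n+1 choose k) B_k = 0 for n >= 1.\<close>
fun bernoulli :: "nat \<Rightarrow> real" where
  "bernoulli 0 = 1"
| "bernoulli (Suc n) =
     - (\<Sum>k<Suc n. real (Suc (Suc n) choose k) * bernoulli k) / real (Suc (Suc n))"

definition bernpoly :: "nat \<Rightarrow> real \<Rightarrow> real" where
  "bernpoly n x = (\<Sum>k\<le>n. real (n choose k) * bernoulli k * x ^ (n - k))"

definition pbernpoly :: "nat \<Rightarrow> real \<Rightarrow> real" where
  "pbernpoly n x = bernpoly n (x - of_int \<lfloor>x\<rfloor>)"

text \<open>Barnes zeta function zeta_r(s,z) = sum over (n_1,...,n_r) in N^r of
  (n_1+...+n_r+z)^(-s) (meaningful for Re s > r).\<close>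
definition barnes_zeta :: "nat \<Rightarrow> complex \<Rightarrow> complex \<Rightarrow> complex" where
  "barnes_zeta r s z =
     (\<Sum>\<^sub>\<infinity>ns\<in>{ns :: nat list. length ns = r}. (of_nat (sum_list ns) + z) powr (- s))"

text \<open>P^l_r(z) = 1/(r-1)! sum_{j=l}^{r-1} (j choose l) s(r,j+1) (-z)^(j-l),
  where s(l,j) are the (unsigned) Stirling numbers of the first kind,
  (x)_l = sum_j s(l,j) x^j (library: stirling, cf. stirling_pochhammer).\<close>
definition P_coef :: "nat \<Rightarrow> nat \<Rightarrow> complex \<Rightarrow> complex" where
  "P_coef r l z = (1 / fact (r - 1)) *
     (\<Sum>j=l..r-1. of_nat (j choose l) * of_nat (stirling r (j + 1)) * (- z) ^ (j - l))"

end

theory Submission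
  imports Defs "HOL-Complex_Analysis.Cauchy_Integral_Formula"
begin

text \<open>
  Grouping the tuples \<open>(n\<^sub>1, ..., n\<^sub>r)\<close> by their sum \<open>n\<close>, of which there are
  \<open>(n + r - 1 choose n)\<close>, and writing this binomial coefficient as a polynomial in \<open>n + z\<close>
  via Stirling numbers, gives \<open>\<zeta>\<^sub>r(s, z) = \<Sum>\<^sub>l P\<^sup>l\<^sub>r(z) \<zeta>(s - l, z)\<close> with the Hurwitz series
  \<open>\<zeta>(w, z) = \<Sum>\<^sub>n (n + z)\<^sup>-\<^sup>w\<close>. Each Hurwitz series is expanded by Euler-Maclaurin summation
  of order \<open>M\<^sub>l + 1\<close>: on every unit interval \<open>(t + a)\<^sup>-\<^sup>w\<close> is integrated by parts against the
  Bernoulli polynomials, and the resulting identities telescope. The remainder integral of the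
  periodic Bernoulli function splits into its unit-interval pieces; each piece is entire in the
  exponent and the series of pieces converges locally uniformly for \<open>Re w > -M\<^sub>l\<close>, so the
  remainder is holomorphic there, which gives the continuation.
\<close>

section \<open>Bernoulli numbers and polynomials\<close>

declare bernoulli.simps(2) [simp del]

lemma bernoulli_1 [simp]: "bernoulli (Suc 0) = - 1 / 2"
  by (simp add: bernoulli.simps numeral_2_eq_2)

lemma sum_binomial_bernoulli_eq_0:
  assumes "n \<ge> 2"
  shows "(\<Sum>k<n. real (n choose k) * bernoulli k) = 0"
proof -
  obtain m where m: "n = Suc (Suc m)"
    using assms by (metis add_2_eq_Suc le_Suc_ex)
  have "real n * bernoulli (Suc m) = - (\<Sum>k<Suc m. real (n choose k) * bernoulli k)"
    by (simp add: m bernoulli.simps del: sum.lessThan_Suc)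
  then show ?thesis
    by (simp add: m)
qed

definition gbernpoly :: "nat \<Rightarrow> 'a::real_normed_field \<Rightarrow> 'a" where
  "gbernpoly n x = (\<Sum>k\<le>n. of_real (real (n choose k) * bernoulli k) * x ^ (n - k))"

lemma gbernpoly_of_real: "gbernpoly n (of_real t) = of_real (bernpoly n t)"
  by (simp add: gbernpoly_def bernpoly_def)

lemma gbernpoly_0_left [simp]: "gbernpoly 0 x = 1"
  by (simp add: gbernpoly_def)

lemma gbernpoly_0_right [simp]: "gbernpoly n 0 = of_real (bernoulli n)"
  by (simp add: gbernpoly_def power_0_left if_distrib cong: if_cong)

lemma gbernpoly_1_right: "gbernpoly n 1 = of_real (bernoulli n) + (if n = 1 then 1 else 0)"
proof -
  have "gbernpoly n 1 = of_real (\<Sum>k\<le>n. real (n choose k) * bernoulli k)"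
    by (simp add: gbernpoly_def)
  also have "(\<Sum>k\<le>n. real (n choose k) * bernoulli k) = (\<Sum>k<n. real (n choose k) * bernoulli k) + bernoulli n"
    by (simp add: lessThan_Suc_atMost[symmetric])
  finally have *: "gbernpoly n 1 = of_real ((\<Sum>k<n. real (n choose k) * bernoulli k) + bernoulli n)" .
  consider "n = 0" | "n = 1" | "n \<ge> 2"
    by linarith
  then show ?thesis
  proof cases
    case 3
    then show ?thesis
      by (simp add: * sum_binomial_bernoulli_eq_0)
  qed (simp_all add: gbernpoly_def)
qed

lemma has_field_derivative_gbernpoly:
  "(gbernpoly (Suc n) has_field_derivative of_nat (Suc n) * gbernpoly n x) (at x)"
proof -
  have "(gbernpoly (Suc n) has_field_derivative
      (\<Sum>k\<le>Suc n. of_real (real (Suc n choose k) * bernoulli k) * (of_nat (Suc n - k) * x ^ (Suc n - k - 1)))) (at x)"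
    (is "(_ has_field_derivative ?D) _")
    unfolding gbernpoly_def[abs_def]
    by (intro DERIV_sum DERIV_cmult DERIV_power[OF DERIV_ident, THEN DERIV_cong]) simp
  moreover have "?D = of_nat (Suc n) * gbernpoly n x"
  proof -
    have coeff: "of_nat (Suc n - k) * of_nat (Suc n choose k) = (of_nat (Suc n * (n choose k)) :: 'a)" for k
      by (metis binomial_absorb_comp diff_Suc_1 of_nat_mult)
    have "?D = (\<Sum>k\<le>n. of_real (bernoulli k) * x ^ (n - k) * (of_nat (Suc n - k) * of_nat (Suc n choose k)))"
      by (simp add: sum.atMost_Suc ac_simps)
    also have "\<dots> = of_nat (Suc n) * gbernpoly n x"
      unfolding gbernpoly_def sum_distrib_left coeff by (intro sum.cong refl) (simp add: algebra_simps)
    finally show ?thesis .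
  qed
  ultimately show ?thesis
    by (rule DERIV_cong)
qed

lemma continuous_on_bernpoly [continuous_intros]:
  "continuous_on S f \<Longrightarrow> continuous_on S (\<lambda>x. bernpoly n (f x))"
  unfolding bernpoly_def by (intro continuous_intros)

lemma bernpoly_bounded:
  obtains C where "C \<ge> 0" "\<And>t. t \<in> {0..1} \<Longrightarrow> \<bar>bernpoly n t\<bar> \<le> C"
proof -
  have cont: "continuous_on {0..1} (\<lambda>t. \<bar>bernpoly n t\<bar>)"
    by (intro continuous_intros)
  obtain t0 where "t0 \<in> {0..1}" "\<forall>t\<in>{0..1}. \<bar>bernpoly n t\<bar> \<le> \<bar>bernpoly n t0\<bar>"
    using continuous_attains_sup[OF compact_Icc _ cont] by auto
  then show ?thesis
    using that[of "\<bar>bernpoly n t0\<bar>"] by auto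
qed

lemma pbernpoly_bounded:
  obtains C where "C \<ge> 0" "\<And>x. \<bar>pbernpoly n x\<bar> \<le> C"
proof -
  obtain C where "C \<ge> 0" and C: "\<And>t. t \<in> {0..1} \<Longrightarrow> \<bar>bernpoly n t\<bar> \<le> C"
    using bernpoly_bounded[of n] by blast
  have "x - of_int \<lfloor>x\<rfloor> \<in> {0..1}" for x :: real
    using frac_lt_1[of x] by (auto simp: frac_def)
  with \<open>C \<ge> 0\<close> C show ?thesis
    using that unfolding pbernpoly_def by blast
qed

section \<open>Estimates for complex powers\<close>

lemma norm_powr_le_powr:
  fixes x e :: complex
  assumes "0 < c" "c \<le> norm x" "Re e \<le> 0"
  shows "norm (x powr e) \<le> exp (\<bar>Im e\<bar> * pi) * c powr Re e"
proof -
  have "- Im e * Arg x \<le> \<bar>Im e\<bar> * \<bar>Arg x\<bar>"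
    by (metis abs_ge_self abs_minus_cancel abs_mult mult_minus_left)
  also have "\<dots> \<le> \<bar>Im e\<bar> * pi"
    using Arg_bounded[of x] by (intro mult_left_mono) auto
  finally have "- Im e * Arg x \<le> \<bar>Im e\<bar> * pi" .
  moreover have "norm x powr Re e \<le> c powr Re e"
    using assms by (intro powr_mono2') auto
  ultimately have "exp (- Im e * Arg x) * norm x powr Re e \<le> exp (\<bar>Im e\<bar> * pi) * c powr Re e"
    by (intro mult_mono) auto
  then show ?thesis
    by (simp add: norm_powr_complex mult.commute)
qed

lemma norm_shift_powr_le:
  fixes z e :: complex
  assumes "0 \<le> x" "0 < Re z" "Re e \<le> 0"
  shows "norm ((of_real x + z) powr e) \<le> exp (\<bar>Im e\<bar> * pi) * (x + Re z) powr Re e"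
  using assms complex_Re_le_cmod[of "of_real x + z"] by (intro norm_powr_le_powr) auto

lemma norm_nat_shift_powr_le:
  fixes z e :: complex
  assumes "1 \<le> n" "0 < Re z" "Re e \<le> 0"
  shows "norm ((of_nat n + z) powr e) \<le> exp (\<bar>Im e\<bar> * pi) * real n powr Re e"
  using assms complex_Re_le_cmod[of "of_nat n + z"] by (intro norm_powr_le_powr) auto

lemma continuous_on_shift_powr:
  assumes "0 < Re a" "S \<subseteq> {0..}"
  shows "continuous_on S (\<lambda>t::real. (of_real t + a) powr e)"
proof (rule continuous_on_powr_complex)
  show "S \<subseteq> {t. 0 \<le> Re (of_real t + a) \<or> Im (of_real t + a) \<noteq> 0}"
    using assms by auto
  show "\<And>t. t \<in> S \<Longrightarrow> of_real t + a = 0 \<Longrightarrow> 0 < Re e"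
    using assms by (auto simp: complex_eq_iff)
qed (auto intro!: continuous_intros)

lemma tendsto_nat_shift_powr_0:
  fixes z q :: complex
  assumes "0 < Re z" "Re q < 0"
  shows "(\<lambda>n. (of_nat n + z) powr q) \<longlonglongrightarrow> 0"
proof (rule Lim_null_comparison)
  show "\<forall>\<^sub>F n in sequentially. norm ((of_nat n + z) powr q) \<le> exp (\<bar>Im q\<bar> * pi) * real n powr Re q"
    using assms by (intro eventually_sequentiallyI[of 1] norm_nat_shift_powr_le) auto
  show "(\<lambda>n. exp (\<bar>Im q\<bar> * pi) * real n powr Re q) \<longlonglongrightarrow> 0"
    using assms by (intro tendsto_mult_right_zero tendsto_neg_powr filterlim_real_sequentially)
qed

lemma summable_norm_nat_shift_powr:
  fixes z w :: complex
  assumes "0 < Re z" "1 < Re w"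
  shows "summable (\<lambda>n. norm ((of_nat n + z) powr (- w)))"
proof (rule summable_comparison_test_ev)
  show "\<forall>\<^sub>F n in sequentially. norm (norm ((of_nat n + z) powr (- w))) \<le> exp (\<bar>Im w\<bar> * pi) * real n powr (- Re w)"
    using assms norm_nat_shift_powr_le[of _ z "- w"] by (intro eventually_sequentiallyI[of 1]) auto
  show "summable (\<lambda>n. exp (\<bar>Im w\<bar> * pi) * real n powr (- Re w))"
    using assms by (intro summable_mult) (simp add: summable_real_powr_iff)
qed

lemma integrable_on_shift_powr:
  fixes c q :: real
  assumes "0 < c" "q < -1"
  shows "(\<lambda>x. (x + c) powr q) integrable_on {0..}"
proof -
  define H where "H y = (y + c) powr (q + 1) / (q + 1)" for y
  have "((\<lambda>x. (x + c) powr q) has_integral (0 - H 0)) {0..}"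
  proof (rule has_integral_to_inf)
    show "(\<lambda>x. (x + c) powr q) integrable_on {0..y}" for y
      using assms by (intro integrable_continuous_interval continuous_intros) auto
    have "((\<lambda>x. (x + c) powr q) has_integral (H y - H 0)) {0..y}" if "y \<ge> 0" for y
      unfolding H_def using assms that
      by (intro fundamental_theorem_of_calculus)
         (auto intro!: derivative_eq_intros simp flip: has_real_derivative_iff_has_vector_derivative)
    then have "\<forall>\<^sub>F y in at_top. integral {0..y} (\<lambda>x. (x + c) powr q) = H y - H 0"
      by (meson eventually_at_top_linorderI integral_unique)
    moreover have "((\<lambda>y. H y - H 0) \<longlongrightarrow> 0 - H 0) at_top"
    proof -
      have "filterlim (\<lambda>y. c + y) at_top at_top"
        by (rule filterlim_tendsto_add_at_top[OF tendsto_const filterlim_ident])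
      then have "((\<lambda>y. (y + c) powr (q + 1)) \<longlongrightarrow> 0) at_top"
        using assms by (intro tendsto_neg_powr) (auto simp: add.commute)
      then show ?thesis
        unfolding H_def by (intro tendsto_intros tendsto_divide_zero)
    qed
    ultimately show "((\<lambda>y. integral {0..y} (\<lambda>x. (x + c) powr q)) \<longlongrightarrow> 0 - H 0) at_top"
      by (simp add: filterlim_cong)
  qed (use assms in auto)
  then show ?thesis
    by blast
qed

section \<open>Euler-Maclaurin summation for the Hurwitz series\<close>

lemma has_field_derivative_shift_powr:
  fixes u a e :: complex
  assumes "u + a \<notin> \<real>\<^sub>\<le>\<^sub>0"
  shows "((\<lambda>u. (u + a) powr e) has_field_derivative e * (u + a) powr (e - 1)) (at u)"
  using DERIV_chain2[OF has_field_derivative_powr[OF assms] DERIV_add[OF DERIV_ident DERIV_const]]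
  by simp

definition em_integrand :: "nat \<Rightarrow> complex \<Rightarrow> complex \<Rightarrow> complex \<Rightarrow> complex" where
  "em_integrand p w a u = gbernpoly p u / fact p * pochhammer w p * (u + a) powr (- w - of_nat p)"

text \<open>The boundary terms of \<open>p\<close> integrations by parts of \<open>(u + a) powr (- w)\<close> against the
  Bernoulli polynomials.\<close>

definition em_antideriv :: "nat \<Rightarrow> complex \<Rightarrow> complex \<Rightarrow> complex \<Rightarrow> complex" where
  "em_antideriv p w a u =
     (\<Sum>j<p. gbernpoly (Suc j) u / fact (Suc j) * pochhammer w j * (u + a) powr (- w - of_nat j))
     - (u + a) powr (1 - w) / (1 - w)"

lemma has_field_derivative_em_antideriv_summand:
  fixes u a w :: complex
  assumes "u + a \<notin> \<real>\<^sub>\<le>\<^sub>0"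
  shows "((\<lambda>u. gbernpoly (Suc j) u / fact (Suc j) * pochhammer w j * (u + a) powr (- w - of_nat j))
     has_field_derivative (em_integrand j w a u - em_integrand (Suc j) w a u)) (at u)"
proof -
  have "((\<lambda>u. gbernpoly (Suc j) u / fact (Suc j) * pochhammer w j * (u + a) powr (- w - of_nat j))
     has_field_derivative
      (of_nat (Suc j) * gbernpoly j u / fact (Suc j) * pochhammer w j * (u + a) powr (- w - of_nat j)
       + ((- w - of_nat j) * (u + a) powr (- w - of_nat j - 1)) * (gbernpoly (Suc j) u / fact (Suc j) * pochhammer w j))) (at u)"
    (is "(_ has_field_derivative ?D) _")
    by (intro DERIV_mult DERIV_cmult_right DERIV_cdivide has_field_derivative_gbernpoly
        has_field_derivative_shift_powr assms)
  moreover have "?D = em_integrand j w a u - em_integrand (Suc j) w a u"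
  proof -
    have "(u + a) powr (- w - of_nat (Suc j)) = (u + a) powr (- w - of_nat j - 1)"
      by (simp add: algebra_simps)
    then show ?thesis
      unfolding em_integrand_def pochhammer_rec' fact_Suc by (simp add: field_simps del: of_nat_Suc)
  qed
  ultimately show ?thesis
    by (rule DERIV_cong)
qed

lemma has_field_derivative_em_antideriv:
  fixes u a w :: complex
  assumes "u + a \<notin> \<real>\<^sub>\<le>\<^sub>0" "w \<noteq> 1"
  shows "(em_antideriv p w a has_field_derivative - em_integrand p w a u) (at u)"
proof -
  have "(em_antideriv p w a has_field_derivative
      (\<Sum>j<p. em_integrand j w a u - em_integrand (Suc j) w a u)
      - ((1 - w) * (u + a) powr (1 - w - 1)) / (1 - w)) (at u)"
    (is "(_ has_field_derivative ?D) _")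
    unfolding em_antideriv_def[abs_def]
    by (intro DERIV_diff DERIV_sum DERIV_cdivide has_field_derivative_em_antideriv_summand
        has_field_derivative_shift_powr assms)
  moreover have "?D = - em_integrand p w a u"
    using assms sum_lessThan_telescope'[of "\<lambda>j. em_integrand j w a u" p]
    by (simp add: em_integrand_def)
  ultimately show ?thesis
    by (rule DERIV_cong)
qed

lemma has_integral_em_integrand:
  assumes "0 < Re a" "w \<noteq> 1"
  shows "((\<lambda>t. em_integrand p w a (of_real t)) has_integral
           (em_antideriv p w a 0 - em_antideriv p w a 1)) {0..1}"
proof -
  have "((\<lambda>t. - em_integrand p w a (of_real t)) has_integral
           (em_antideriv p w a (of_real 1) - em_antideriv p w a (of_real 0))) {0..1}"
  proof (rule fundamental_theorem_of_calculus)
    fix t :: real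
    assume "t \<in> {0..1}"
    then have "of_real t + a \<notin> \<real>\<^sub>\<le>\<^sub>0"
      using assms by (auto simp: nonpos_Reals_def complex_eq_iff)
    then show "((\<lambda>t. em_antideriv p w a (of_real t)) has_vector_derivative
                 - em_integrand p w a (of_real t)) (at t within {0..1})"
      by (intro has_vector_derivative_real_field has_field_derivative_em_antideriv assms)
  qed simp
  from has_integral_neg[OF this] show ?thesis
    by simp
qed

lemma em_antideriv_1:
  assumes "p \<ge> 1"
  shows "em_antideriv p w a 1 = em_antideriv p w (1 + a) 0 + (1 + a) powr (- w)"
proof -
  have "em_antideriv p w a 1 =
     (\<Sum>j<p. of_real (bernoulli (Suc j)) / fact (Suc j) * pochhammer w j * (1 + a) powr (- w - of_nat j)
       + (if j = 0 then (1 + a) powr (- w) else 0)) - (1 + a) powr (1 - w) / (1 - w)"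
    unfolding em_antideriv_def gbernpoly_1_right
    by (intro arg_cong2[where f = "(-)"] sum.cong refl) (auto simp: add.commute)
  then show ?thesis
    using assms by (simp add: sum.distrib em_antideriv_def ring_distribs)
qed

lemma hurwitz_partial_sum_euler_maclaurin:
  fixes z w :: complex
  assumes "0 < Re z" "w \<noteq> 1" "p \<ge> 1"
  shows "(\<Sum>n<Suc N. (of_nat n + z) powr (- w)) =
           z powr (- w) + em_antideriv p w z 0 - em_antideriv p w (of_nat N + z) 0
           - (\<Sum>k<N. integral {0..1} (\<lambda>t. em_integrand p w (of_nat k + z) (of_real t)))"
proof (induction N)
  case (Suc N)
  have "0 < Re (of_nat N + z)"
    using assms by simp
  from integral_unique[OF has_integral_em_integrand[where p = p, OF this \<open>w \<noteq> 1\<close>]]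
  have "integral {0..1} (\<lambda>t. em_integrand p w (of_nat N + z) (of_real t))
     = em_antideriv p w (of_nat N + z) 0 - em_antideriv p w (of_nat (Suc N) + z) 0
       - (of_nat (Suc N) + z) powr (- w)"
    unfolding em_antideriv_1[OF \<open>p \<ge> 1\<close>] by (simp add: algebra_simps)
  then show ?case
    using Suc by simp
qed simp

definition bernpoly_powr_integral :: "nat \<Rightarrow> complex \<Rightarrow> complex \<Rightarrow> complex" where
  "bernpoly_powr_integral p a e = integral {0..1} (\<lambda>t. of_real (bernpoly p t) * (of_real t + a) powr e)"

lemma has_integral_bernpoly_powr:
  assumes "0 < Re a"
  shows "((\<lambda>t. of_real (bernpoly p t) * (of_real t + a) powr e) has_integral
           bernpoly_powr_integral p a e) {0..1}"
  unfolding bernpoly_powr_integral_def using assms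
  by (intro integrable_integral integrable_continuous_interval continuous_intros
      continuous_on_shift_powr) auto

lemma has_integral_pbernpoly_powr_unit:
  assumes "0 < Re z"
  shows "((\<lambda>x. of_real (pbernpoly p x) * (of_real x + z) powr e) has_integral
           bernpoly_powr_integral p (of_nat k + z) e) {real k..real k + 1}"
proof -
  define f where "f t = of_real (bernpoly p t) * (of_real t + (of_nat k + z)) powr e" for t
  have "(f has_integral bernpoly_powr_integral p (of_nat k + z) e) {0..1}"
    unfolding f_def using assms by (intro has_integral_bernpoly_powr) simp
  from has_integral_shift_real_ivl[OF this, of "- real k"]
  have "((\<lambda>x. f (x - real k)) has_integral bernpoly_powr_integral p (of_nat k + z) e) {real k..real k + 1}"
    by (simp add: add.commute)
  then show ?thesis
  proof (rule has_integral_spike_finite[rotated 2])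
    fix x
    assume "x \<in> {real k..real k + 1} - {real k + 1}"
    then have "\<lfloor>x\<rfloor> = int k"
      by (auto simp: floor_eq_iff)
    then show "of_real (pbernpoly p x) * (of_real x + z) powr e = f (x - real k)"
      unfolding f_def pbernpoly_def by (simp add: algebra_simps)
  qed simp
qed

lemma pbernpoly_powr_integral_sums:
  fixes z e :: complex and p :: nat
  assumes z: "0 < Re z" and e: "Re e < -1"
  defines "g \<equiv> \<lambda>x. of_real (pbernpoly p x) * (of_real x + z) powr e"
  shows "g integrable_on {0..}"
    and "(\<lambda>k. bernpoly_powr_integral p (of_nat k + z) e) sums integral {0..} g"
proof -
  define K where "K k = bernpoly_powr_integral p (of_nat k + z) e" for k
  have partial: "(g has_integral (\<Sum>k<N. K k)) {0..real N}" for N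
  proof (induction N)
    case (Suc N)
    then have "(g has_integral (\<Sum>k<N. K k) + K N) {0..real N + 1}"
      using has_integral_combine[of 0 "real N" "real N + 1" g] has_integral_pbernpoly_powr_unit[OF z]
      unfolding g_def K_def by simp
    then show ?case
      by (simp add: add.commute)
  qed (use has_integral_refl(1)[of g 0] in \<open>simp add: cbox_interval\<close>)
  obtain C where "C \<ge> 0" and C: "\<And>x. \<bar>pbernpoly p x\<bar> \<le> C"
    using pbernpoly_bounded[of p] by blast
  define h where "h x = C * exp (\<bar>Im e\<bar> * pi) * (x + Re z) powr Re e" for x
  have h: "h integrable_on {0..}"
    unfolding h_def using z e by (intro integrable_on_mult_right integrable_on_shift_powr) auto
  have g_le_h: "norm (g x) \<le> h x" if "x \<in> {0..}" for x
  proof -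
    have "norm (g x) = \<bar>pbernpoly p x\<bar> * norm ((of_real x + z) powr e)"
      unfolding g_def by (simp add: norm_mult)
    also have "\<dots> \<le> C * (exp (\<bar>Im e\<bar> * pi) * (x + Re z) powr Re e)"
      using that z e \<open>C \<ge> 0\<close> by (intro mult_mono C norm_shift_powr_le) auto
    finally show ?thesis
      unfolding h_def by (simp add: mult.assoc)
  qed
  define gN where "gN N x = (if x \<le> real N then g x else 0)" for N x
  have "{..real N} \<inter> {0..} = {0..real N}" for N
    by auto
  then have gN: "(gN N has_integral (\<Sum>k<N. K k)) {0..}" for N
    using partial[of N] unfolding gN_def has_integral_restrict_Int[of "{..real N}", simplified]
    by simp
  have "norm (gN N x) \<le> h x" if "x \<in> {0..}" for N x
    using g_le_h[OF that] norm_ge_zero[of "g x"] unfolding gN_def by (auto simp del: norm_ge_zero)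
  moreover have "(\<lambda>N. gN N x) \<longlonglongrightarrow> g x" for x
  proof (rule tendsto_eventually)
    show "\<forall>\<^sub>F N in sequentially. gN N x = g x"
      using eventually_ge_at_top[of "nat \<lceil>x\<rceil>"]
      by eventually_elim (auto simp: gN_def nat_le_iff ceiling_le_iff)
  qed
  ultimately have "g integrable_on {0..}" "(\<lambda>N. integral {0..} (gN N)) \<longlonglongrightarrow> integral {0..} g"
    using dominated_convergence[of gN "{0..}" h g] gN h by blast+
  moreover have "integral {0..} (gN N) = (\<Sum>k<N. K k)" for N
    using gN by (rule integral_unique)
  ultimately show "g integrable_on {0..}" "(\<lambda>k. bernpoly_powr_integral p (of_nat k + z) e) sums integral {0..} g"
    unfolding sums_def K_def[symmetric] by simp_all
qed

lemma holomorphic_bernpoly_powr_integral: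
  assumes "0 < Re a"
  shows "bernpoly_powr_integral p a holomorphic_on UNIV"
proof -
  have base: "of_real t + a \<notin> \<real>\<^sub>\<le>\<^sub>0" if "t \<in> cbox 0 1" for t
    using assms that by (auto simp: nonpos_Reals_def complex_eq_iff cbox_interval)
  then have nonzero: "of_real t + a \<noteq> 0" if "t \<in> cbox 0 1" for t
    using that by fastforce
  have "(\<lambda>e. integral (cbox 0 1) (\<lambda>t. of_real (bernpoly p t) * (of_real t + a) powr e)) holomorphic_on UNIV"
  proof (rule leibniz_rule_holomorphic)
    fix e :: complex and t :: real
    assume "t \<in> cbox 0 1"
    then show "((\<lambda>e. of_real (bernpoly p t) * (of_real t + a) powr e) has_field_derivative
        of_real (bernpoly p t) * (Ln (of_real t + a) * (of_real t + a) powr e)) (at e within UNIV)"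
      using nonzero by (intro DERIV_cmult has_field_derivative_powr_right) auto
  next
    show "(\<lambda>t. of_real (bernpoly p t) * (of_real t + a) powr e) integrable_on cbox 0 1" for e
      using has_integral_bernpoly_powr[OF assms] by (auto simp: cbox_interval)
  next
    show "continuous_on (UNIV \<times> cbox 0 1)
      (\<lambda>(e, t). of_real (bernpoly p t) * (Ln (of_real t + a) * (of_real t + a) powr e))"
      using assms base nonzero unfolding case_prod_beta
      by (intro continuous_intros continuous_on_Ln' continuous_on_powr_complex) (auto simp: cbox_interval)
  qed simp
  then show ?thesis
    by (simp add: bernpoly_powr_integral_def[abs_def] cbox_interval)
qed

lemma norm_bernpoly_powr_integral_le:
  fixes a y :: complex
  assumes c: "1 \<le> c" "c \<le> Re a" and y: "Re y \<le> \<sigma>" "\<sigma> \<le> 0" "\<bar>Im y\<bar> \<le> E"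
    and C: "\<And>t. t \<in> {0..1} \<Longrightarrow> \<bar>bernpoly p t\<bar> \<le> C"
  shows "norm (bernpoly_powr_integral p a y) \<le> C * exp (E * pi) * c powr \<sigma>"
proof -
  have bound: "norm (of_real (bernpoly p t) * (of_real t + a) powr y) \<le> C * exp (E * pi) * c powr \<sigma>"
    if t: "t \<in> cbox 0 1" for t
  proof -
    have "norm ((of_real t + a) powr y) \<le> exp (\<bar>Im y\<bar> * pi) * c powr Re y"
      using t c y complex_Re_le_cmod[of "of_real t + a"]
      by (intro norm_powr_le_powr) (auto simp: cbox_interval)
    also have "\<dots> \<le> exp (E * pi) * c powr \<sigma>"
      using c y by (intro mult_mono powr_mono) auto
    finally show ?thesis
      using C[of t] t unfolding norm_mult mult.assoc
      by (intro mult_mono) (auto simp: cbox_interval)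
  qed
  have "0 \<le> C"
    using C[of 0] by simp
  with has_integral_bound[OF _ has_integral_bernpoly_powr[unfolded cbox_interval[symmetric]] bound] c
  show ?thesis
    by (simp add: cbox_interval)
qed

lemma holomorphic_on_pbernpoly_powr_integral:
  fixes z :: complex
  assumes z: "0 < Re z"
  shows "(\<lambda>e. integral {0..} (\<lambda>x. of_real (pbernpoly p x) * (of_real x + z) powr e))
           holomorphic_on {e. Re e < -1}"
proof -
  define S where "S = {e :: complex. Re e < -1}"
  define K where "K k = bernpoly_powr_integral p (of_nat k + z)" for k
  obtain C where C: "\<And>t. t \<in> {0..1} \<Longrightarrow> \<bar>bernpoly p t\<bar> \<le> C"
    using bernpoly_bounded[of p] by blast
  have "open S"
    unfolding S_def by (simp add: open_halfspace_Re_lt)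
  have "(\<lambda>e. \<Sum>k. K k e) holomorphic_on S"
  proof (rule holomorphic_uniform_sequence[OF \<open>open S\<close>])
    show "(\<lambda>e. \<Sum>k<n. K k e) holomorphic_on S" for n
      unfolding K_def using z
      by (intro holomorphic_intros holomorphic_on_subset[OF holomorphic_bernpoly_powr_integral]) auto
  next
    fix x
    assume "x \<in> S"
    define d where "d = (-1 - Re x) / 2"
    define \<sigma> where "\<sigma> = Re x + d"
    define E where "E = \<bar>Im x\<bar> + d"
    have "0 < d" "\<sigma> < -1"
      using \<open>x \<in> S\<close> unfolding d_def \<sigma>_def S_def by (auto simp: field_simps)
    have near: "Re y \<le> \<sigma>" "\<bar>Im y\<bar> \<le> E" if "y \<in> cball x d" for y
      using that abs_Re_le_cmod[of "x - y"] abs_Im_le_cmod[of "x - y"]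
      unfolding \<sigma>_def E_def by (auto simp: dist_norm)
    then have "cball x d \<subseteq> S"
      using \<open>\<sigma> < -1\<close> unfolding S_def by fastforce
    moreover have "uniform_limit (cball x d) (\<lambda>n e. \<Sum>k<n. K k e) (\<lambda>e. \<Sum>k. K k e) sequentially"
    proof (rule Weierstrass_m_test_ev)
      show "\<forall>\<^sub>F k in sequentially. \<forall>y\<in>cball x d. norm (K k y) \<le> C * exp (E * pi) * real k powr \<sigma>"
        using z \<open>\<sigma> < -1\<close> near unfolding K_def
        by (intro eventually_sequentiallyI[of 1] ballI norm_bernpoly_powr_integral_le C) auto
      show "summable (\<lambda>k. C * exp (E * pi) * real k powr \<sigma>)"
        using \<open>\<sigma> < -1\<close> by (intro summable_mult) (simp add: summable_real_powr_iff)
    qed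
    ultimately show "\<exists>d>0. cball x d \<subseteq> S \<and> uniform_limit (cball x d) (\<lambda>n e. \<Sum>k<n. K k e) (\<lambda>e. \<Sum>k. K k e) sequentially"
      using \<open>0 < d\<close> by blast
  qed
  then show ?thesis
    unfolding S_def
  proof (rule holomorphic_transform)
    fix e :: complex
    assume "e \<in> {e. Re e < -1}"
    then show "(\<Sum>k. K k e) = integral {0..} (\<lambda>x. of_real (pbernpoly p x) * (of_real x + z) powr e)"
      using pbernpoly_powr_integral_sums(2)[OF z] unfolding K_def by (simp add: sums_iff)
  qed
qed

definition hurwitz_series :: "complex \<Rightarrow> complex \<Rightarrow> complex" where
  "hurwitz_series w z = (\<Sum>n. (of_nat n + z) powr (- w))"

lemma integral_em_integrand:
  "integral {0..1} (\<lambda>t. em_integrand p w a (of_real t)) =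
     pochhammer w p / fact p * bernpoly_powr_integral p a (- w - of_nat p)"
  by (simp add: em_integrand_def gbernpoly_of_real bernpoly_powr_integral_def ac_simps)

lemma em_antideriv_0:
  "em_antideriv (Suc m) w z 0 =
     - 1 / 2 * z powr (- w)
     + (\<Sum>k=1..m. of_real (bernoulli (k + 1) / fact (k + 1)) * pochhammer w k * z powr (- w - of_nat k))
     - z powr (1 - w) / (1 - w)"
proof -
  have "(\<Sum>j<Suc m. of_real (bernoulli (Suc j)) / fact (Suc j) * pochhammer w j * z powr (- w - of_nat j))
     = of_real (bernoulli (Suc 0)) * z powr (- w)
       + (\<Sum>k<m. of_real (bernoulli (Suc (Suc k))) / fact (Suc (Suc k)) * pochhammer w (Suc k)
                  * z powr (- w - of_nat (Suc k)))" (is "_ = _ + ?S")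
    by (subst sum.lessThan_Suc_shift) simp
  also have "?S = (\<Sum>k=1..m. of_real (bernoulli (k + 1) / fact (k + 1)) * pochhammer w k * z powr (- w - of_nat k))"
    unfolding One_nat_def sum.atLeast1_atMost_eq by simp
  finally show ?thesis
    by (simp add: em_antideriv_def)
qed

lemma tendsto_em_antideriv_0:
  assumes "0 < Re z" "1 < Re w"
  shows "(\<lambda>N. em_antideriv p w (of_nat N + z) 0) \<longlonglongrightarrow> 0"
proof -
  have "(\<lambda>N. em_antideriv p w (of_nat N + z) 0) \<longlonglongrightarrow> (\<Sum>j<p. 0) - 0"
    unfolding em_antideriv_def gbernpoly_0_right add_0_left
    by (intro tendsto_diff tendsto_sum tendsto_mult_right_zero tendsto_divide_zero
        tendsto_nat_shift_powr_0) (use assms in auto)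
  then show ?thesis
    by simp
qed

definition hurwitz_euler_maclaurin :: "nat \<Rightarrow> complex \<Rightarrow> complex \<Rightarrow> complex" where
  "hurwitz_euler_maclaurin m w z =
     z powr (1 - w) / (w - 1) + 1 / 2 * z powr (- w)
     + (\<Sum>k=1..m. of_real (bernoulli (k + 1) / fact (k + 1)) * pochhammer w k * z powr (- w - of_nat k))
     - pochhammer w (m + 1) / fact (m + 1) *
        integral {0..} (\<lambda>x. of_real (pbernpoly (m + 1) x) * (of_real x + z) powr (- w - of_nat m - 1))"

theorem hurwitz_series_eq_euler_maclaurin:
  fixes z w :: complex
  assumes z: "0 < Re z" and w: "1 < Re w"
  shows "hurwitz_series w z = hurwitz_euler_maclaurin m w z"
proof -
  define c where "c = pochhammer w (Suc m) / fact (Suc m)"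
  define I where "I = integral {0..} (\<lambda>x. of_real (pbernpoly (Suc m) x) * (of_real x + z) powr (- w - of_nat (Suc m)))"
  have "w \<noteq> 1"
    using w by auto
  have "(\<lambda>N. \<Sum>n<Suc N. (of_nat n + z) powr (- w)) \<longlonglongrightarrow> hurwitz_series w z"
    unfolding hurwitz_series_def
    using summable_LIMSEQ[OF summable_norm_cancel[OF summable_norm_nat_shift_powr[OF z w]]]
    by (rule LIMSEQ_Suc)
  moreover have "(\<lambda>N. \<Sum>n<Suc N. (of_nat n + z) powr (- w)) \<longlonglongrightarrow>
      z powr (- w) + em_antideriv (Suc m) w z 0 - 0 - c * I"
  proof -
    have "(\<lambda>N. \<Sum>k<N. bernpoly_powr_integral (Suc m) (of_nat k + z) (- w - of_nat (Suc m))) \<longlonglongrightarrow> I"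
      using pbernpoly_powr_integral_sums(2)[OF z, of "- w - of_nat (Suc m)"] w
      unfolding I_def sums_def by simp
    then have "(\<lambda>N. \<Sum>k<N. integral {0..1} (\<lambda>t. em_integrand (Suc m) w (of_nat k + z) (of_real t))) \<longlonglongrightarrow> c * I"
      unfolding integral_em_integrand c_def sum_distrib_left[symmetric] by (rule tendsto_mult_left)
    then show ?thesis
      unfolding hurwitz_partial_sum_euler_maclaurin[OF z \<open>w \<noteq> 1\<close> le_add1[of 1 m, unfolded plus_1_eq_Suc]]
      by (intro tendsto_intros tendsto_em_antideriv_0 z w) auto
  qed
  ultimately have "hurwitz_series w z = z powr (- w) + em_antideriv (Suc m) w z 0 - c * I"
    by (simp add: LIMSEQ_unique)
  moreover have "B / (1 - w) = - (B / (w - 1))" for B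
    by (metis divide_minus_right minus_diff_eq)
  ultimately show ?thesis
    unfolding hurwitz_euler_maclaurin_def em_antideriv_0 c_def I_def by (simp add: algebra_simps)
qed

lemma holomorphic_hurwitz_euler_maclaurin:
  assumes "0 < Re z"
  shows "(\<lambda>w. hurwitz_euler_maclaurin m w z) holomorphic_on {w. - real m < Re w} - {1}"
proof -
  have "(\<lambda>w. integral {0..} (\<lambda>x. of_real (pbernpoly (m + 1) x) * (of_real x + z) powr (- w - of_nat m - 1)))
      holomorphic_on {w. - real m < Re w} - {1}"
  proof (rule holomorphic_on_compose_gen[OF _ holomorphic_on_pbernpoly_powr_integral[OF assms], unfolded o_def])
    show "(\<lambda>w. - w - of_nat m - 1) holomorphic_on {w. - real m < Re w} - {1}"
      by (intro holomorphic_intros)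
  qed auto
  then show ?thesis
    unfolding hurwitz_euler_maclaurin_def using assms by (intro holomorphic_intros) auto
qed

section \<open>The Barnes zeta function as a combination of Hurwitz series\<close>

lemma infsum_lists_by_sum_list:
  fixes f :: "nat \<Rightarrow> 'a::banach"
  assumes "summable (\<lambda>n. real ((n + r - 1) choose n) * norm (f n))"
  shows "(\<Sum>\<^sub>\<infinity>ns\<in>{ns :: nat list. length ns = r}. f (sum_list ns)) =
           (\<Sum>n. real ((n + r - 1) choose n) *\<^sub>R f n)"
proof -
  define B where "B n = {ns :: nat list. length ns = r \<and> sum_list ns = n}" for n
  define F where "F x = f (fst x)" for x :: "nat \<times> nat list"
  have finite_B: "finite (B n)" for n
  proof (rule finite_subset)
    show "B n \<subseteq> {ns. set ns \<subseteq> {0..n} \<and> length ns = r}"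
      unfolding B_def using member_le_sum_list by fastforce
  qed (simp add: finite_lists_length_eq)
  have card_B: "card (B n) = (n + r - 1) choose n" for n
    unfolding B_def using card_length_sum_list[of r n] by simp
  have fibre: "(\<Sum>\<^sub>\<infinity>ns\<in>B n. F (n, ns)) = real ((n + r - 1) choose n) *\<^sub>R f n"
    and fibre_norm: "(\<Sum>\<^sub>\<infinity>ns\<in>B n. norm (F (n, ns))) = real ((n + r - 1) choose n) * norm (f n)" for n
    using finite_B[of n] by (simp_all add: F_def sum_constant_scaleR card_B)
  have bij: "bij_betw (\<lambda>ns. (sum_list ns, ns)) {ns. length ns = r} (Sigma UNIV B)"
    unfolding bij_betw_def B_def by (auto simp: inj_on_def image_iff)
  have "F summable_on Sigma UNIV B"
  proof (rule abs_summable_summable, rule iffD2[OF Infinite_Sum.abs_summable_on_Sigma_iff], intro conjI ballI)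
    show "(\<lambda>y. norm (F (n, y))) summable_on B n" for n
      using finite_B[of n] by simp
    have "(\<lambda>n. norm (real ((n + r - 1) choose n) * norm (f n))) summable_on UNIV"
      using assms by (intro norm_summable_imp_summable_on) simp
    then show "(\<lambda>n. norm (\<Sum>\<^sub>\<infinity>y\<in>B n. norm (F (n, y)))) summable_on UNIV"
      by (simp add: fibre_norm)
  qed
  have "(\<Sum>\<^sub>\<infinity>ns\<in>{ns. length ns = r}. f (sum_list ns)) = (\<Sum>\<^sub>\<infinity>x\<in>Sigma UNIV B. F x)"
    using infsum_reindex_bij_betw[OF bij, of F] by (simp add: F_def[abs_def])
  also have "\<dots> = (\<Sum>\<^sub>\<infinity>n. \<Sum>\<^sub>\<infinity>ns\<in>B n. F (n, ns))"
    by (rule infsum_Sigma_banach[OF \<open>F summable_on Sigma UNIV B\<close>, symmetric])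
  also have "\<dots> = (\<Sum>\<^sub>\<infinity>n. real ((n + r - 1) choose n) *\<^sub>R f n)"
    by (simp add: fibre)
  also have "\<dots> = (\<Sum>n. real ((n + r - 1) choose n) *\<^sub>R f n)"
  proof -
    have "summable (\<lambda>n. norm (real ((n + r - 1) choose n) *\<^sub>R f n))"
      using assms by simp
    then show ?thesis
      by (intro infsumI norm_summable_imp_has_sum[OF _ summable_sums[OF summable_norm_cancel]])
  qed
  finally show ?thesis .
qed

lemma sum_atMost_triangle_swap:
  "(\<Sum>j\<le>q. \<Sum>l\<le>j. f j l) = (\<Sum>l\<le>(q::nat). \<Sum>j=l..q. f j l :: 'a::comm_monoid_add)"
  by (induction q) (simp_all add: sum.distrib)

lemma pochhammer_plus_1_stirling:
  fixes x :: "'a::idom"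
  shows "pochhammer (x + 1) q = (\<Sum>j\<le>q. of_nat (stirling (Suc q) (Suc j)) * x ^ j)"
proof (cases "x = 0")
  case True
  then have "(\<Sum>j\<le>q. of_nat (stirling (Suc q) (Suc j)) * x ^ j) = (\<Sum>j\<le>q. if j = 0 then of_nat (fact q) else 0)"
    by (intro sum.cong refl) (auto simp: stirling_Suc_n_1 simp del: stirling.simps)
  then show ?thesis
    using True by (simp add: pochhammer_fact flip: pochhammer_of_nat del: stirling.simps)
next
  case False
  have "x * pochhammer (x + 1) q = pochhammer x (Suc q)"
    by (simp add: pochhammer_rec)
  also have "\<dots> = (\<Sum>k\<le>Suc q. of_nat (stirling (Suc q) k) * x ^ k)"
    by (simp add: stirling_pochhammer)
  also have "\<dots> = (\<Sum>j\<le>q. of_nat (stirling (Suc q) (Suc j)) * x ^ Suc j)"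
    by (subst sum.atMost_Suc_shift) simp
  also have "\<dots> = x * (\<Sum>j\<le>q. of_nat (stirling (Suc q) (Suc j)) * x ^ j)"
    by (simp add: sum_distrib_left ac_simps)
  finally show ?thesis
    using False by simp
qed

lemma binomial_eq_sum_P_coef:
  fixes z :: complex
  assumes "r \<ge> 1"
  shows "of_nat ((n + r - 1) choose n) = (\<Sum>l<r. P_coef r l z * (of_nat n + z) ^ l)"
proof -
  obtain q where r: "r = Suc q"
    using assms by (cases r) auto
  have "(of_nat ((n + r - 1) choose n) :: complex) = of_nat ((n + q) choose q)"
    unfolding r by (simp add: binomial_symmetric[of q "n + q", simplified])
  also have "\<dots> = pochhammer (of_nat n + 1) q / fact q"
    by (simp add: binomial_gbinomial gbinomial_pochhammer')
  also have "pochhammer (of_nat n + 1) q =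
      (\<Sum>j\<le>q. \<Sum>l\<le>j. of_nat (stirling r (Suc j)) * (of_nat (j choose l) * (of_nat n + z) ^ l * (- z) ^ (j - l)))"
  proof -
    have "(of_nat n :: complex) ^ j = (\<Sum>l\<le>j. of_nat (j choose l) * (of_nat n + z) ^ l * (- z) ^ (j - l))" for j
      using binomial_ring[of "of_nat n + z" "- z" j] by simp
    then show ?thesis
      unfolding pochhammer_plus_1_stirling r by (simp add: sum_distrib_left del: stirling.simps)
  qed
  also have "\<dots> = (\<Sum>l\<le>q. \<Sum>j=l..q. of_nat (stirling r (Suc j)) * (of_nat (j choose l) * (of_nat n + z) ^ l * (- z) ^ (j - l)))"
    by (rule sum_atMost_triangle_swap)
  also have "\<dots> / fact q = (\<Sum>l<r. P_coef r l z * (of_nat n + z) ^ l)"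
    unfolding P_coef_def r
    by (simp add: lessThan_Suc_atMost sum_divide_distrib sum_distrib_right sum_distrib_left ac_simps
        del: stirling.simps)
  finally show ?thesis .
qed

lemma barnes_zeta_eq_sum_hurwitz_series:
  fixes z s :: complex
  assumes r: "r \<ge> 1" and z: "0 < Re z" and s: "real r < Re s"
  shows "barnes_zeta r s z = (\<Sum>l<r. P_coef r l z * hurwitz_series (s - of_nat l) z)"
proof -
  define X where "X l n = (of_nat n + z) powr (- (s - of_nat l))" for l n
  have summable_X: "summable (\<lambda>n. norm (X l n))" if "l < r" for l
    unfolding X_def using that s by (intro summable_norm_nat_shift_powr z) auto
  have expand: "real ((n + r - 1) choose n) *\<^sub>R (of_nat n + z) powr (- s) = (\<Sum>l<r. P_coef r l z * X l n)" for n
  proof -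
    have "of_nat n + z \<noteq> 0"
      using z by (auto simp: complex_eq_iff)
    then have power: "(of_nat n + z) ^ l * (of_nat n + z) powr (- s) = X l n" for l
      unfolding X_def using powr_add[of "of_nat n + z" "of_nat l" "- s"] by (simp add: powr_nat')
    have "real ((n + r - 1) choose n) *\<^sub>R (of_nat n + z) powr (- s)
        = of_nat ((n + r - 1) choose n) * (of_nat n + z) powr (- s)"
      by (simp add: scaleR_conv_of_real)
    also have "\<dots> = (\<Sum>l<r. P_coef r l z * ((of_nat n + z) ^ l * (of_nat n + z) powr (- s)))"
      unfolding binomial_eq_sum_P_coef[OF r, of n z] sum_distrib_right by (simp add: mult.assoc)
    finally show ?thesis
      by (simp only: power)
  qed
  have "summable (\<lambda>n. real ((n + r - 1) choose n) * norm ((of_nat n + z) powr (- s)))"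
  proof (rule summable_comparison_test')
    show "summable (\<lambda>n. \<Sum>l<r. norm (P_coef r l z) * norm (X l n))"
      by (intro summable_sum summable_mult summable_X) auto
    fix n
    have "norm (real ((n + r - 1) choose n) * norm ((of_nat n + z) powr (- s)))
        = norm (\<Sum>l<r. P_coef r l z * X l n)"
      by (simp flip: expand)
    also have "\<dots> \<le> (\<Sum>l<r. norm (P_coef r l z) * norm (X l n))"
      by (rule order_trans[OF norm_sum]) (simp add: norm_mult)
    finally show "norm (real ((n + r - 1) choose n) * norm ((of_nat n + z) powr (- s)))
        \<le> (\<Sum>l<r. norm (P_coef r l z) * norm (X l n))" .
  qed
  then have "barnes_zeta r s z = (\<Sum>n. real ((n + r - 1) choose n) *\<^sub>R (of_nat n + z) powr (- s))"
    unfolding barnes_zeta_def by (rule infsum_lists_by_sum_list)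
  also have "\<dots> = (\<Sum>n. \<Sum>l<r. P_coef r l z * X l n)"
    by (simp only: expand)
  also have "\<dots> = (\<Sum>l<r. \<Sum>n. P_coef r l z * X l n)"
    by (intro suminf_sum summable_mult summable_norm_cancel[OF summable_X]) auto
  also have "\<dots> = (\<Sum>l<r. P_coef r l z * hurwitz_series (s - of_nat l) z)"
    unfolding hurwitz_series_def X_def[symmetric]
    by (intro sum.cong refl suminf_mult summable_norm_cancel[OF summable_X]) auto
  finally show ?thesis .
qed

theorem proposition3p1:
  fixes r :: nat and z :: complex and Ms :: "nat \<Rightarrow> nat"
  assumes r: "r \<ge> 1" and z: "Re z > 0"
  defines "M \<equiv> Max {real l - real (Ms l) | l. l < r}"
  defines "F \<equiv> (\<lambda>s::complex.
      (\<Sum>l<r. P_coef r l z / (s - of_nat l - 1) * z powr (- s + of_nat l + 1))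
    + (1/2) * (\<Sum>l<r. P_coef r l z * z powr (- s + of_nat l))
    + (\<Sum>l<r. P_coef r l z *
         (\<Sum>k=1..Ms l. of_real (bernoulli (k + 1) / fact (k + 1)) *
                         pochhammer (s - of_nat l) k * z powr (- s + of_nat l - of_nat k)))
    - (\<Sum>l<r. P_coef r l z * pochhammer (s - of_nat l) (Ms l + 1) / fact (Ms l + 1) *
         integral {0..} (\<lambda>x::real. of_real (pbernpoly (Ms l + 1) x) *
            (of_real x + z) powr (- s + of_nat l - of_nat (Ms l) - 1))))"
  shows "(\<forall>s. Re s > real r \<longrightarrow> barnes_zeta r s z = F s)
       \<and> (\<forall>s l. Re s > M \<and> l < r \<longrightarrow>
            (\<lambda>x::real. of_real (pbernpoly (Ms l + 1) x) *
               (of_real x + z) powr (- s + of_nat l - of_nat (Ms l) - 1)) integrable_on {0..})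
       \<and> F holomorphic_on ({s. Re s > M} - of_nat ` {1..r})"
proof -
  have "real l - real (Ms l) \<le> M" if "l < r" for l
  proof -
    have "{real l - real (Ms l) | l. l < r} = (\<lambda>l. real l - real (Ms l)) ` {..<r}"
      by auto
    then show ?thesis
      unfolding M_def using that by (auto intro!: Max_ge)
  qed
  then have shifted_domain: "s - of_nat l \<in> {w. - real (Ms l) < Re w}" if "M < Re s" "l < r" for s l
    using that by fastforce
  have F_eq: "F = (\<lambda>s. \<Sum>l<r. P_coef r l z * hurwitz_euler_maclaurin (Ms l) (s - of_nat l) z)"
    unfolding F_def hurwitz_euler_maclaurin_def
    by (simp add: fun_eq_iff sum.distrib sum_subtractf sum_distrib_left algebra_simps)
  have "barnes_zeta r s z = F s" if "real r < Re s" for s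
    unfolding F_eq barnes_zeta_eq_sum_hurwitz_series[OF r z that]
    using that by (intro sum.cong refl arg_cong2[where f = "(*)"] hurwitz_series_eq_euler_maclaurin z) auto
  moreover have "F holomorphic_on ({s. M < Re s} - of_nat ` {1..r})"
    unfolding F_eq
  proof (intro holomorphic_intros holomorphic_on_compose_gen[OF _ holomorphic_hurwitz_euler_maclaurin[OF z], unfolded o_def])
    fix l
    assume "l \<in> {..<r}"
    then show "(\<lambda>s. s - of_nat l) ` ({s. M < Re s} - of_nat ` {1..r}) \<subseteq> {w. - real (Ms l) < Re w} - {1}"
      using shifted_domain by (force simp: image_iff algebra_simps)
  qed
  moreover have "(\<lambda>x. of_real (pbernpoly (Ms l + 1) x) *
      (of_real x + z) powr (- s + of_nat l - of_nat (Ms l) - 1)) integrable_on {0..}"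
    if "M < Re s" "l < r" for s l
    using shifted_domain[OF that] by (intro pbernpoly_powr_integral_sums(1) z) auto
  ultimately show ?thesis
    by blast
qed

end
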